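(* Let $(X_t)_{t\ge1}$ be i.i.d. real random variables on $(\Omega,\mathcal{F},\mathbb{P})$ with mean $\mu$, whose cumulant-generating function $\phi(\lambda)=\log\mathbb{E}[\exp(\lambda X_1)]$ is finite on an open interval $]\lambda_1,\lambda_2[$ containing $0$. Define for $x\in\mathbb{R}$ \[d(x,\mu)=\sup_{\lambda\in]\lambda_1,\lambda_2[}\{\lambda x-\phi(\lambda)\}.\] Let $(\mathcal{F}_t)_{t\ge0}$ be an increasing sequence of sub-$\sigma$-fields with $\sigma(X_1,\dots,X_t)\subset\mathcal{F}_t$ and $X_s$ independent of $\mathcal{F}_t$ for $s>t$, and let $(\epsilon_t)_{t\ge1}$ be $\{0,1\}$-valued with $\epsilon_t$ $\mathcal{F}_{t-1}$-measurable. For an integer $n\ge2$ let $S(n)=\sum_{s=1}^n\epsilon_sX_s$, $N(n)=\sum_{s=1}^n\epsilon_s$, $\hat\mu(n)=S(n)/N(n)$. Then for every $\delta>0$, \[\mathbb{P}\big(N(n)\ge1,\ \hat\mu(n)<\mu,\ N(n)\,d(\hat\mu(n),\mu)>\delta\big)\le e\lceil\delta\log(n)\rceil\exp(-\delta).\] *)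

theory Defs
  imports "HOL-Probability.Probability"
begin

definition cgf :: "'a measure \<Rightarrow> ('a \<Rightarrow> real) \<Rightarrow> real \<Rightarrow> real" where
  "cgf M Y l = ln (integral\<^sup>L M (\<lambda>\<omega>. exp (l * Y \<omega>)))"

definition cramer_d :: "'a measure \<Rightarrow> ('a \<Rightarrow> real) \<Rightarrow> real \<Rightarrow> real \<Rightarrow> real \<Rightarrow> ereal" where
  "cramer_d M Y l1 l2 x = (SUP l\<in>{l1<..<l2}. ereal (l * x - cgf M Y l))"

end

theory Submission imports Defs begin

(* For a fixed lambda in ]l1,l2[ the process
     W_m = exp (SUM s=1..m. eps_s (lambda X_s - phi lambda))
   has expectation 1, because eps_{m+1} is F_m-measurable and X_{m+1} is independent of F_m.
   Markov's inequality then bounds P(W_n >= e^a) by e^(-a).  To handle the supremum defining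
   d(muhat, mu), we slice the range [1, n] of N(n) geometrically: on the slice
   r^(k-1) <= N <= r^k the event forces muhat into a set A of means below mu on which a single
   lambda (chosen via a supremum argument, using phi lambda >= lambda mu) almost attains the
   threshold delta / r^k.  A union bound over the ceil(ln n / ln r) slices, the limit of the
   near-optimality parameter theta -> 1, and the choice r = delta/(delta-1) give the claim
   (for delta <= 1 the right-hand side is at least 1). *)

text \<open>Jensen's inequality for the exponential, via the tangent line at the mean;
  it gives both positivity of the moment generating function and \<open>\<phi>(l) \<ge> l \<mu>\<close>.\<close>
lemma (in prob_space) exp_mean_le_exp_moment:
  fixes Y :: "'a \<Rightarrow> real"
  assumes "integrable M Y" "integrable M (\<lambda>\<omega>. exp (l * Y \<omega>))"
  shows "exp (l * integral\<^sup>L M Y) \<le> (\<integral>\<omega>. exp (l * Y \<omega>) \<partial>M)"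
proof -
  define m where "m = integral\<^sup>L M Y"
  have tangent: "exp (l * m) * (1 + (l * Y \<omega> - l * m)) \<le> exp (l * Y \<omega>)" for \<omega>
  proof -
    have "exp (l * m) * (1 + (l * Y \<omega> - l * m)) \<le> exp (l * m) * exp (l * Y \<omega> - l * m)"
      using exp_ge_add_one_self[of "l * Y \<omega> - l * m"] by (intro mult_left_mono) auto
    also have "\<dots> = exp (l * Y \<omega>)" by (simp add: exp_diff)
    finally show ?thesis .
  qed
  have "(\<integral>\<omega>. exp (l * m) * (1 + (l * Y \<omega> - l * m)) \<partial>M) \<le> (\<integral>\<omega>. exp (l * Y \<omega>) \<partial>M)"
    by (rule integral_mono) (use assms tangent in auto)
  moreover have "(\<integral>\<omega>. exp (l * m) * (1 + (l * Y \<omega> - l * m)) \<partial>M) = exp (l * m)"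
    using assms(1) by (simp add: m_def prob_space algebra_simps)
  ultimately show ?thesis by (simp add: m_def)
qed

text \<open>Take \<open>l\<close> from a point close
  to \<open>Sup A\<close>; such \<open>l\<close> is negative, so \<open>l x - \<phi> l\<close> only grows as \<open>x\<close> decreases.\<close>
lemma uniform_dual_witness:
  fixes \<phi> :: "real \<Rightarrow> real"
  assumes l1: "l1 < 0" and c: "0 < c" "c' < c"
    and lin: "\<And>l. l \<in> {l1<..<l2} \<Longrightarrow> l * \<mu> \<le> \<phi> l"
    and A: "A = {x. x < \<mu> \<and> (\<exists>l\<in>{l1<..<l2}. l * x - \<phi> l > c)}" and ne: "A \<noteq> {}"
  shows "\<exists>l\<in>{l1<..<l2}. \<forall>x\<in>A. l * x - \<phi> l > c'"
proof -
  have bdd: "bdd_above A" unfolding A by (auto intro!: bdd_aboveI[of _ \<mu>])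
  define z where "z = Sup A"
  have "z - (c - c') / (- l1) < z" using c l1 by (simp add: divide_pos_neg)
  then obtain x where x: "x \<in> A" "z - (c - c') / (- l1) < x"
    using less_cSup_iff[OF ne bdd] unfolding z_def by auto
  then obtain l where l: "l \<in> {l1<..<l2}" "l * x - \<phi> l > c" "x < \<mu>" unfolding A by auto
  have l_neg: "l < 0"
  proof (rule ccontr)
    assume "\<not> l < 0"
    then have "l * x \<le> l * \<mu>" using l(3) by (intro mult_left_mono) auto
    then show False using lin[OF l(1)] l(2) c by linarith
  qed
  have xz: "x \<le> z" using cSup_upper[OF x(1) bdd] z_def by simp
  have "(z - x) * (- l1) < c - c'"
    using x(2) pos_less_divide_eq[of "-l1" "z-x" "c-c'"] l1 by simp
  moreover have "(-l) * (z - x) \<le> (-l1) * (z - x)" using l(1) xz by (intro mult_right_mono) auto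
  ultimately have near_sup: "l * z > l * x - (c - c')" by (simp add: algebra_simps)
  show ?thesis
  proof (intro bexI[OF _ l(1)] ballI)
    fix y assume "y \<in> A"
    then have "y \<le> z" using cSup_upper[OF _ bdd] z_def by simp
    then have "l * z \<le> l * y" using l_neg by (intro mult_left_mono_neg) auto
    then show "l * y - \<phi> l > c'" using near_sup l(2) by linarith
  qed
qed

lemma ereal_mult_SUP_gt:
  fixes N \<delta> :: real
  assumes "N > 0" "ereal N * (SUP l\<in>L. ereal (f l)) > ereal \<delta>"
  shows "\<exists>l\<in>L. \<delta> / N < f l"
proof -
  have "(SUP l\<in>L. ereal (f l)) > ereal (\<delta> / N)"
  proof (rule ccontr)
    assume "\<not> ?thesis"
    then have "ereal N * (SUP l\<in>L. ereal (f l)) \<le> ereal N * ereal (\<delta> / N)"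
      by (intro ereal_mult_left_mono) (use assms in auto)
    then show False using assms by simp
  qed
  then show ?thesis by (auto simp: less_SUP_iff)
qed

text \<open>Monotonicity of a probability against a measurable superset, also when the smaller set is
  not known to be measurable (then its measure is zero).\<close>
lemma (in finite_measure) measure_le_measurable_superset:
  assumes "A \<subseteq> B" "B \<in> sets M"
  shows "measure M A \<le> measure M B"
proof (cases "A \<in> sets M")
  case True
  then show ?thesis using assms finite_measure_mono by blast
next
  case False
  then show ?thesis by (simp add: measure_notin_sets)
qed

lemma geometric_slice:
  fixes r x :: real and n :: nat
  assumes r: "r > 1" and n: "n \<ge> 2" and x: "1 \<le> x" "x \<le> real n"
  shows "\<exists>k\<in>{1..nat \<lceil>ln (real n) / ln r\<rceil>}. r ^ (k - 1) \<le> x \<and> x \<le> r ^ k"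
proof -
  define D where "D = nat \<lceil>ln (real n) / ln r\<rceil>"
  have ln_r: "ln r > 0" using r by simp
  have "0 < ln (real n) / ln r" using n ln_r by simp
  then have D1: "D \<ge> 1" unfolding D_def by linarith
  have pow_exp: "r ^ k = exp (real k * ln r)" for k
    using r powr_realpow[of r k] by (simp add: powr_def mult.commute)
  show ?thesis
  proof (cases "x \<le> r")
    case True
    then show ?thesis using x D1 by (auto simp: D_def intro!: bexI[of _ 1])
  next
    case False
    define q where "q = ln x / ln r"
    have q1: "q > 1" using False r ln_r by (simp add: q_def)
    define k where "k = nat \<lceil>q\<rceil>"
    have k_eq: "real k = real_of_int \<lceil>q\<rceil>" using q1 by (simp add: k_def)
    have k1: "k \<ge> 1" using q1 by (simp add: k_def le_nat_iff)
    have "q \<le> ln (real n) / ln r" unfolding q_def using x ln_r by (intro divide_right_mono) auto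
    then have kD: "k \<le> D" unfolding k_def D_def by (intro nat_mono ceiling_mono)
    have x_exp: "x = exp (q * ln r)" using x ln_r by (simp add: q_def)
    have "x \<le> r ^ k" unfolding pow_exp x_exp k_eq using ln_r by (simp add: mult_right_mono)
    moreover have "real (k - 1) \<le> q" using k1 k_eq by (simp add: of_nat_diff)
    then have "r ^ (k - 1) \<le> x" unfolding pow_exp x_exp using ln_r by (simp add: mult_right_mono)
    ultimately show ?thesis using k1 kD by (auto simp: D_def)
  qed
qed

text \<open>With the ratio \<open>r = \<delta> / (\<delta> - 1)\<close> the number of slices is at most \<open>\<lceil>\<delta> ln n\<rceil>\<close>,
  since \<open>ln r \<ge> 1 / \<delta>\<close>.\<close>
lemma slice_count:
  fixes \<delta> :: real and n :: nat
  assumes d: "\<delta> > 1" and n: "n \<ge> 2"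
  shows "real (nat \<lceil>ln (real n) / ln (\<delta> / (\<delta> - 1))\<rceil>) \<le> real_of_int \<lceil>\<delta> * ln (real n)\<rceil>"
proof -
  define r where "r = \<delta> / (\<delta> - 1)"
  have r1: "r > 1" using d by (simp add: r_def)
  have "ln (1 / r) \<le> 1 / r - 1" using r1 by (intro ln_le_minus_one) auto
  moreover have "1 / r - 1 = - 1 / \<delta>" using d by (simp add: r_def field_simps)
  ultimately have "ln r \<ge> 1 / \<delta>" using r1 by (simp add: ln_div)
  then have "1 / ln r \<le> \<delta>" using r1 d by (simp add: field_simps)
  moreover have ln_n: "ln (real n) > 0" using n by simp
  ultimately have "ln (real n) / ln r \<le> \<delta> * ln (real n)"
    using mult_left_mono[of "1 / ln r" \<delta> "ln (real n)"] by (simp add: mult.commute)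
  then have "\<lceil>ln (real n) / ln r\<rceil> \<le> \<lceil>\<delta> * ln (real n)\<rceil>" by (rule ceiling_mono)
  moreover have "\<lceil>ln (real n) / ln r\<rceil> \<ge> 0" using divide_pos_pos[OF ln_n, of "ln r"] r1 by simp
  ultimately show ?thesis unfolding r_def by simp
qed

section \<open>The adaptive sampling model\<close>

locale adaptive_sampling = prob_space M
  for M :: "'a measure" +
  fixes X :: "nat \<Rightarrow> 'a \<Rightarrow> real" and F :: "nat \<Rightarrow> 'a measure" and eps :: "nat \<Rightarrow> 'a \<Rightarrow> real"
    and \<mu> l1 l2 :: real
  assumes rv: "\<And>t. t \<ge> 1 \<Longrightarrow> X t \<in> borel_measurable M"
    and ident: "\<And>t. t \<ge> 1 \<Longrightarrow> distr M borel (X t) = distr M borel (X 1)"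
    and int1: "integrable M (X 1)"
    and mean: "integral\<^sup>L M (X 1) = \<mu>"
    and l1_neg: "l1 < 0"
    and cgf_fin: "\<And>l. l \<in> {l1<..<l2} \<Longrightarrow> integrable M (\<lambda>\<omega>. exp (l * X 1 \<omega>))"
    and sub: "\<And>t. subalgebra M (F t)"
    and mono: "\<And>s t. s \<le> t \<Longrightarrow> sets (F s) \<subseteq> sets (F t)"
    and adapt: "\<And>s t. 1 \<le> s \<Longrightarrow> s \<le> t \<Longrightarrow> X s \<in> borel_measurable (F t)"
    and indepF: "\<And>s t. t < s \<Longrightarrow>
        indep_set (sets (F t)) (sets (vimage_algebra (space M) (X s) borel))"
    and eps01: "\<And>t \<omega>. t \<ge> 1 \<Longrightarrow> \<omega> \<in> space M \<Longrightarrow> eps t \<omega> \<in> {0, 1}"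
    and eps_pred: "\<And>t. t \<ge> 1 \<Longrightarrow> eps t \<in> borel_measurable (F (t - 1))"
begin

abbreviation \<phi> :: "real \<Rightarrow> real" where "\<phi> \<equiv> cgf M (X 1)"

definition pulls :: "nat \<Rightarrow> 'a \<Rightarrow> real" where
  "pulls n \<omega> = (\<Sum>s=1..n. eps s \<omega>)"

definition sampled_sum :: "nat \<Rightarrow> 'a \<Rightarrow> real" where
  "sampled_sum n \<omega> = (\<Sum>s=1..n. eps s \<omega> * X s \<omega>)"

definition deviation_event :: "nat \<Rightarrow> real \<Rightarrow> 'a set" where
  "deviation_event n \<delta> = {\<omega> \<in> space M. 1 \<le> pulls n \<omega> \<and> sampled_sum n \<omega> / pulls n \<omega> < \<mu> \<and>
     ereal (pulls n \<omega>) * cramer_d M (X 1) l1 l2 (sampled_sum n \<omega> / pulls n \<omega>) > ereal \<delta>}"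

definition exp_process :: "real \<Rightarrow> nat \<Rightarrow> 'a \<Rightarrow> real" where
  "exp_process l m \<omega> = exp (\<Sum>s\<in>{1..m}. eps s \<omega> * (l * X s \<omega> - \<phi> l))"

lemma space_F: "space (F t) = space M"
  using sub[of t] by (simp add: subalgebra_def)

lemma measurable_F_mono:
  assumes "s \<le> t" "f \<in> borel_measurable (F s)" shows "f \<in> borel_measurable (F t)"
proof -
  have "subalgebra (F t) (F s)" using mono[OF assms(1)] by (simp add: subalgebra_def space_F)
  then show ?thesis using measurable_from_subalg assms(2) by blast
qed

lemma measurable_F_M: "f \<in> borel_measurable (F s) \<Longrightarrow> f \<in> borel_measurable M"
  using measurable_from_subalg[OF sub] .

lemma indep_past_next:
  assumes G: "G \<in> borel_measurable (F m)" and g: "g \<in> borel_measurable borel"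
  shows "indep_var borel G borel (\<lambda>\<omega>. g (X (Suc m) \<omega>))"
proof -
  let ?V = "vimage_algebra (space M) (X (Suc m)) borel"
  have H: "(\<lambda>\<omega>. g (X (Suc m) \<omega>)) \<in> borel_measurable ?V"
    using measurable_compose[OF measurable_vimage_algebra1 g, of "X (Suc m)" "space M"]
    by (simp add: o_def)
  have sG: "sigma_sets (space M) {G -` A \<inter> space M | A. A \<in> sets borel} \<subseteq> sets (F m)"
    using sets.sigma_sets_subset[of "{G -` A \<inter> space M | A. A \<in> sets borel}" "F m"]
      measurable_sets[OF G] space_F by auto
  have sH: "sigma_sets (space M) {(\<lambda>\<omega>. g (X (Suc m) \<omega>)) -` A \<inter> space M | A. A \<in> sets borel}
      \<subseteq> sets ?V"
    using sets.sigma_sets_subset[of "{(\<lambda>\<omega>. g (X (Suc m) \<omega>)) -` A \<inter> space M | A. A \<in> sets borel}" ?V]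
      measurable_sets[OF H] by auto
  have "indep_set (sigma_sets (space M) {G -` A \<inter> space M | A. A \<in> sets borel})
     (sigma_sets (space M) {(\<lambda>\<omega>. g (X (Suc m) \<omega>)) -` A \<inter> space M | A. A \<in> sets borel})"
    using indepF[of m "Suc m"] unfolding indep_set_def
    by (rule indep_sets_mono_sets) (use sG sH in \<open>auto split: bool.split\<close>)
  moreover have "random_variable borel G" using measurable_F_M[OF G] .
  moreover have "random_variable borel (\<lambda>\<omega>. g (X (Suc m) \<omega>))" using rv[of "Suc m"] g by measurable
  ultimately show ?thesis by (simp add: indep_var_eq)
qed

lemma exp_moment:
  assumes l: "l \<in> {l1<..<l2}"
  shows "integrable M (\<lambda>\<omega>. exp (l * X (Suc m) \<omega>))"
    and "(\<integral>\<omega>. exp (l * X (Suc m) \<omega>) \<partial>M) = exp (\<phi> l)"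
proof -
  have meas: "X 1 \<in> borel_measurable M" "X (Suc m) \<in> borel_measurable M" using rv by auto
  have f: "(\<lambda>x. exp (l * x)) \<in> borel_measurable borel" by measurable
  have d: "distr M borel (X (Suc m)) = distr M borel (X 1)" by (rule ident) simp
  have "integrable (distr M borel (X 1)) (\<lambda>x. exp (l * x))"
    using integrable_distr_eq[OF meas(1) f] cgf_fin[OF l] by simp
  then show "integrable M (\<lambda>\<omega>. exp (l * X (Suc m) \<omega>))"
    using integrable_distr_eq[OF meas(2) f] d by simp
  have "0 < (\<integral>\<omega>. exp (l * X 1 \<omega>) \<partial>M)"
    using exp_mean_le_exp_moment[OF int1 cgf_fin[OF l]] by (meson exp_gt_zero less_le_trans)
  then have "exp (\<phi> l) = (\<integral>\<omega>. exp (l * X 1 \<omega>) \<partial>M)" by (simp add: cgf_def)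
  then show "(\<integral>\<omega>. exp (l * X (Suc m) \<omega>) \<partial>M) = exp (\<phi> l)"
    using integral_distr[OF meas(1) f] integral_distr[OF meas(2) f] d by simp
qed

lemma cgf_ge_linear:
  assumes l: "l \<in> {l1<..<l2}" shows "l * \<mu> \<le> \<phi> l"
proof -
  have "exp (l * \<mu>) \<le> exp (\<phi> l)"
    using exp_mean_le_exp_moment[OF int1 cgf_fin[OF l]] exp_moment(2)[OF l, of 0] mean by simp
  then show ?thesis by simp
qed

lemma predictable_factor_integral:
  assumes G: "G \<in> borel_measurable (F m)" "integrable M G" and l: "l \<in> {l1<..<l2}"
  shows "integrable M (\<lambda>\<omega>. G \<omega> * exp (l * X (Suc m) \<omega>))"
    and "(\<integral>\<omega>. G \<omega> * exp (l * X (Suc m) \<omega>) \<partial>M) = integral\<^sup>L M G * exp (\<phi> l)"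
proof -
  have ind: "indep_var borel G borel (\<lambda>\<omega>. exp (l * X (Suc m) \<omega>))"
    by (rule indep_past_next[OF G(1)]) measurable
  show "integrable M (\<lambda>\<omega>. G \<omega> * exp (l * X (Suc m) \<omega>))"
    using indep_var_integrable[OF ind G(2) exp_moment(1)[OF l]] .
  show "(\<integral>\<omega>. G \<omega> * exp (l * X (Suc m) \<omega>) \<partial>M) = integral\<^sup>L M G * exp (\<phi> l)"
    using indep_var_lebesgue_integral[OF ind G(2) exp_moment(1)[OF l]] exp_moment(2)[OF l] by simp
qed

lemma exp_process_Suc:
  assumes "\<omega> \<in> space M"
  shows "exp_process l (Suc m) \<omega> = exp_process l m \<omega> * (1 - eps (Suc m) \<omega>)
      + exp_process l m \<omega> * eps (Suc m) \<omega> * exp (l * X (Suc m) \<omega>) / exp (\<phi> l)"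
proof -
  have "exp_process l (Suc m) \<omega>
      = exp_process l m \<omega> * exp (eps (Suc m) \<omega> * (l * X (Suc m) \<omega> - \<phi> l))"
    by (simp add: exp_process_def atLeastAtMostSuc_conv exp_add)
  then show ?thesis using eps01[of "Suc m" \<omega>] assms by (auto simp: exp_diff)
qed

lemma exp_process_adapted: "exp_process l m \<in> borel_measurable (F m)"
proof -
  have "(\<lambda>\<omega>. eps s \<omega> * (l * X s \<omega> - \<phi> l)) \<in> borel_measurable (F m)" if s: "s \<in> {1..m}" for s
  proof -
    have s1: "1 \<le> s" "s - 1 \<le> m" "s \<le> m" using s by auto
    have "eps s \<in> borel_measurable (F m)" using measurable_F_mono[OF s1(2) eps_pred[OF s1(1)]] .
    moreover have "X s \<in> borel_measurable (F m)" using adapt[OF s1(1) s1(3)] .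
    ultimately show ?thesis by measurable
  qed
  then show ?thesis unfolding exp_process_def
    by (rule measurable_compose[OF borel_measurable_sum borel_measurable_exp])
qed

text \<open>One martingale step: the expectation of the exponential process does not change,
  since \<open>E[exp (l X_{m+1})] = exp (\<phi> l)\<close> factors out of the time-\<open>m\<close> part.\<close>
lemma exp_process_step:
  assumes l: "l \<in> {l1<..<l2}" and W: "integrable M (exp_process l m)"
  shows "integrable M (exp_process l (Suc m))"
    and "integral\<^sup>L M (exp_process l (Suc m)) = integral\<^sup>L M (exp_process l m)"
proof -
  let ?W = "exp_process l m" and ?e = "eps (Suc m)"
  let ?step = "\<lambda>\<omega>. ?W \<omega> * (1 - ?e \<omega>) + ?W \<omega> * ?e \<omega> * exp (l * X (Suc m) \<omega>) / exp (\<phi> l)"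
  have e: "?e \<in> borel_measurable (F m)" using eps_pred[of "Suc m"] by simp
  have We_meas: "?W \<in> borel_measurable M" "?e \<in> borel_measurable M"
    using measurable_F_M[OF exp_process_adapted] measurable_F_M[OF e] .
  have int_keep: "integrable M (\<lambda>\<omega>. ?W \<omega> * (1 - ?e \<omega>))"
    and int_pick: "integrable M (\<lambda>\<omega>. ?W \<omega> * ?e \<omega>)"
    by (rule Bochner_Integration.integrable_bound[OF W];
        use We_meas eps01[of "Suc m"] in \<open>force simp: abs_mult\<close>)+
  have "(\<lambda>\<omega>. ?W \<omega> * ?e \<omega>) \<in> borel_measurable (F m)"
    using exp_process_adapted[of l m] e by measurable
  note factor = predictable_factor_integral[OF this int_pick l]
  have "integrable M ?step" using int_keep factor(1) by auto
  then show "integrable M (exp_process l (Suc m))"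
    by (rule Bochner_Integration.integrable_cong[THEN iffD1, rotated -1])
      (auto simp: exp_process_Suc)
  have "integral\<^sup>L M (exp_process l (Suc m)) = integral\<^sup>L M ?step"
    by (rule Bochner_Integration.integral_cong) (auto simp: exp_process_Suc)
  also have "\<dots> = (\<integral>\<omega>. ?W \<omega> * (1 - ?e \<omega>) \<partial>M) + (\<integral>\<omega>. ?W \<omega> * ?e \<omega> \<partial>M)"
    using int_keep factor by simp
  also have "\<dots> = (\<integral>\<omega>. ?W \<omega> * (1 - ?e \<omega>) + ?W \<omega> * ?e \<omega> \<partial>M)"
    using int_keep int_pick by simp
  also have "\<dots> = integral\<^sup>L M ?W"
    by (rule Bochner_Integration.integral_cong) (auto simp: algebra_simps)
  finally show "integral\<^sup>L M (exp_process l (Suc m)) = integral\<^sup>L M ?W" .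
qed

lemma exp_process_mean_one:
  assumes l: "l \<in> {l1<..<l2}"
  shows "integrable M (exp_process l m) \<and> integral\<^sup>L M (exp_process l m) = 1"
proof (induction m)
  case 0
  then show ?case by (simp add: exp_process_def prob_space)
next
  case (Suc m)
  then show ?case using exp_process_step[OF l] by simp
qed

lemma exp_process_tail:
  assumes l: "l \<in> {l1<..<l2}"
  shows "measure M {\<omega> \<in> space M. exp a \<le> exp_process l n \<omega>} \<le> exp (- a)"
proof -
  note W = exp_process_mean_one[OF l, of n]
  have nonneg: "AE \<omega> in M. 0 \<le> exp_process l n \<omega>" by (simp add: exp_process_def)
  have "measure M {\<omega> \<in> space M. exp a \<le> exp_process l n \<omega>} \<le> integral\<^sup>L M (exp_process l n) / exp a"
    using W nonneg by (intro integral_Markov_inequality_measure) auto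
  then show ?thesis using W by (simp add: exp_minus field_simps)
qed

lemma exp_process_eq:
  assumes "pulls n \<omega> \<noteq> 0"
  shows "exp_process l n \<omega>
    = exp (pulls n \<omega> * (l * (sampled_sum n \<omega> / pulls n \<omega>) - \<phi> l))"
proof -
  have "(\<Sum>s\<in>{1..n}. eps s \<omega> * (l * X s \<omega> - \<phi> l)) = l * sampled_sum n \<omega> - \<phi> l * pulls n \<omega>"
    unfolding sampled_sum_def pulls_def sum_distrib_left sum_subtractf[symmetric]
    by (intro sum.cong) (auto simp: algebra_simps)
  moreover have "pulls n \<omega> * (l * (sampled_sum n \<omega> / pulls n \<omega>) - \<phi> l)
      = l * sampled_sum n \<omega> - \<phi> l * pulls n \<omega>"
    using assms by (simp add: field_simps)
  ultimately show ?thesis by (simp add: exp_process_def)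
qed

lemma pulls_le: "\<omega> \<in> space M \<Longrightarrow> pulls n \<omega> \<le> real n"
  using sum_mono[of "{1..n}" "\<lambda>s. eps s \<omega>" "\<lambda>_. 1"] eps01 by (force simp: pulls_def)

lemma deviation_event_witness:
  assumes "\<omega> \<in> deviation_event n \<delta>"
  shows "1 \<le> pulls n \<omega> \<and> pulls n \<omega> \<le> real n \<and> sampled_sum n \<omega> / pulls n \<omega> < \<mu> \<and>
    (\<exists>l\<in>{l1<..<l2}. \<delta> / pulls n \<omega> < l * (sampled_sum n \<omega> / pulls n \<omega>) - \<phi> l)"
  using assms ereal_mult_SUP_gt[of "pulls n \<omega>" \<delta> "\<lambda>l. l * (sampled_sum n \<omega> / pulls n \<omega>) - \<phi> l"]
    pulls_le
  unfolding deviation_event_def cramer_d_def by auto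

definition deficient_means :: "real \<Rightarrow> real set" where
  "deficient_means c = {x. x < \<mu> \<and> (\<exists>l\<in>{l1<..<l2}. l * x - \<phi> l > c)}"

text \<open>On the deviation event with at most \<open>r^k\<close> samples, the empirical mean is deficient at level
  \<open>\<delta> / r^k\<close>, a level that no longer depends on the sample.\<close>
lemma deviation_mean_deficient:
  assumes \<omega>: "\<omega> \<in> deviation_event n \<delta>" and N: "pulls n \<omega> \<le> r ^ k" and \<delta>: "\<delta> > 0"
  shows "sampled_sum n \<omega> / pulls n \<omega> \<in> deficient_means (\<delta> / r ^ k)"
proof -
  from deviation_event_witness[OF \<omega>] obtain l where l: "l \<in> {l1<..<l2}"
      "\<delta> / pulls n \<omega> < l * (sampled_sum n \<omega> / pulls n \<omega>) - \<phi> l"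
    and N1: "pulls n \<omega> \<ge> 1" and below: "sampled_sum n \<omega> / pulls n \<omega> < \<mu>"
    by blast
  have "\<delta> / r ^ k \<le> \<delta> / pulls n \<omega>" using N N1 \<delta> by (intro divide_left_mono) auto
  then show ?thesis unfolding deficient_means_def using l below by (auto intro!: bexI[OF _ l(1)])
qed

text \<open>Bound on one geometric slice \<open>r^(k-1) \<le> N \<le> r^k\<close>: a single dual variable \<open>l\<close>
  (from \<open>uniform_dual_witness\<close>) makes the exponential process exceed \<open>exp (\<theta> \<delta> / r)\<close> there.\<close>
lemma slice_bound:
  assumes k: "k \<ge> 1" and r: "r > 1" and \<theta>: "0 < \<theta>" "\<theta> < 1" and \<delta>: "\<delta> > 0"
  shows "\<exists>B\<in>sets M. measure M B \<le> exp (- (\<theta> * \<delta> / r)) \<and>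
    deviation_event n \<delta> \<inter> {\<omega>. r ^ (k - 1) \<le> pulls n \<omega> \<and> pulls n \<omega> \<le> r ^ k} \<subseteq> B"
proof -
  let ?N = "pulls n" and ?mu = "\<lambda>\<omega>. sampled_sum n \<omega> / pulls n \<omega>"
  let ?E = "deviation_event n \<delta> \<inter> {\<omega>. r ^ (k - 1) \<le> ?N \<omega> \<and> ?N \<omega> \<le> r ^ k}"
  define c where "c = \<delta> / r ^ k"
  have c: "c > 0" using \<delta> r by (simp add: c_def)
  have in_slice: "?mu \<omega> \<in> deficient_means c \<and> r ^ (k - 1) \<le> ?N \<omega> \<and> 1 \<le> ?N \<omega> \<and> \<omega> \<in> space M"
    if "\<omega> \<in> ?E" for \<omega>
  proof -
    have \<omega>: "\<omega> \<in> deviation_event n \<delta>" and N: "r ^ (k - 1) \<le> ?N \<omega>" "?N \<omega> \<le> r ^ k"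
      using that by auto
    have "?mu \<omega> \<in> deficient_means c" unfolding c_def using deviation_mean_deficient[OF \<omega> N(2) \<delta>] .
    moreover have "1 \<le> ?N \<omega>" using deviation_event_witness[OF \<omega>] by blast
    moreover have "\<omega> \<in> space M" using \<omega> by (simp add: deviation_event_def)
    ultimately show ?thesis using N by blast
  qed
  show ?thesis
  proof (cases "deficient_means c = {}")
    case True
    then have "?E = {}" using in_slice by blast
    then show ?thesis by (intro bexI[of _ "{}"]) auto
  next
    case False
    have "\<theta> * c < c" using \<theta> c by simp
    from uniform_dual_witness[OF l1_neg c this cgf_ge_linear deficient_means_def False]
    obtain l where l: "l \<in> {l1<..<l2}" "\<And>x. x \<in> deficient_means c \<Longrightarrow> l * x - \<phi> l > \<theta> * c"
      by blast
    define a where "a = \<theta> * \<delta> / r"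
    have "r ^ k = r * r ^ (k - 1)" using k by (cases k) auto
    then have a: "a = r ^ (k - 1) * (\<theta> * c)" using r by (simp add: a_def c_def field_simps)
    define B where "B = {\<omega> \<in> space M. exp a \<le> exp_process l n \<omega>}"
    have "?E \<subseteq> B"
    proof
      fix \<omega> assume \<omega>: "\<omega> \<in> ?E"
      note slice = in_slice[OF \<omega>]
      have "a \<le> ?N \<omega> * (\<theta> * c)" unfolding a using slice \<theta> c by (intro mult_right_mono) auto
      also have "\<dots> \<le> ?N \<omega> * (l * ?mu \<omega> - \<phi> l)"
        using l(2)[of "?mu \<omega>"] slice by (intro mult_left_mono) auto
      finally show "\<omega> \<in> B" using slice by (simp add: B_def exp_process_eq)
    qed
    moreover have "exp_process l n \<in> borel_measurable M"
      using measurable_F_M[OF exp_process_adapted] .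
    then have "B \<in> sets M" unfolding B_def by measurable
    moreover have "measure M B \<le> exp (- (\<theta> * \<delta> / r))"
      using exp_process_tail[OF l(1), of a] by (simp add: B_def a_def)
    ultimately show ?thesis by blast
  qed
qed

lemma peeling_union_bound:
  assumes r: "r > 1" and n: "n \<ge> 2" and \<theta>: "0 < \<theta>" "\<theta> < 1" and \<delta>: "\<delta> > 0"
  shows "measure M (deviation_event n \<delta>)
    \<le> real (nat \<lceil>ln (real n) / ln r\<rceil>) * exp (- (\<theta> * \<delta> / r))"
proof -
  define D where "D = nat \<lceil>ln (real n) / ln r\<rceil>"
  let ?E = "deviation_event n \<delta>"
  let ?slice = "\<lambda>k. {\<omega>. r ^ (k - 1) \<le> pulls n \<omega> \<and> pulls n \<omega> \<le> r ^ k}"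
  have "\<forall>k\<in>{1..D}. \<exists>B. B \<in> sets M \<and> measure M B \<le> exp (- (\<theta> * \<delta> / r)) \<and> ?E \<inter> ?slice k \<subseteq> B"
  proof
    fix k assume "k \<in> {1..D}"
    then have "k \<ge> 1" by simp
    from slice_bound[OF this r \<theta> \<delta>, where n = n]
    show "\<exists>B. B \<in> sets M \<and> measure M B \<le> exp (- (\<theta> * \<delta> / r)) \<and> ?E \<inter> ?slice k \<subseteq> B"
      by blast
  qed
  from bchoice[OF this] obtain B where B: "\<forall>k\<in>{1..D}. B k \<in> sets M
      \<and> measure M (B k) \<le> exp (- (\<theta> * \<delta> / r)) \<and> ?E \<inter> ?slice k \<subseteq> B k"
    by blast
  have "?E \<subseteq> (\<Union>k\<in>{1..D}. B k)"
  proof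
    fix \<omega> assume \<omega>: "\<omega> \<in> ?E"
    from deviation_event_witness[OF this] have "1 \<le> pulls n \<omega>" "pulls n \<omega> \<le> real n" by auto
    from geometric_slice[OF r n this] obtain k where "k \<in> {1..D}" "\<omega> \<in> ?slice k"
      unfolding D_def by blast
    then show "\<omega> \<in> (\<Union>k\<in>{1..D}. B k)" using B \<omega> by blast
  qed
  then have "measure M ?E \<le> measure M (\<Union>k\<in>{1..D}. B k)"
    using B by (intro measure_le_measurable_superset) auto
  also have "\<dots> \<le> (\<Sum>k\<in>{1..D}. measure M (B k))" using B by (intro measure_UNION_le) auto
  also have "\<dots> \<le> (\<Sum>k\<in>{1..D}. exp (- (\<theta> * \<delta> / r)))" using B by (intro sum_mono) auto
  finally show ?thesis by (simp add: D_def)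
qed

text \<open>Peeling bound for an arbitrary ratio \<open>r > 1\<close>: let \<open>\<theta> \<rightarrow> 1\<close> in the union bound.\<close>
lemma peeling_bound:
  assumes r: "r > 1" and n: "n \<ge> 2" and \<delta>: "\<delta> > 0"
  shows "measure M (deviation_event n \<delta>)
    \<le> real (nat \<lceil>ln (real n) / ln r\<rceil>) * exp (- (\<delta> / r))"
proof -
  define D where "D = real (nat \<lceil>ln (real n) / ln r\<rceil>)"
  have "((\<lambda>\<theta>. D * exp (- (\<theta> * \<delta> / r))) \<longlongrightarrow> D * exp (- (1 * \<delta> / r))) (at_left 1)"
    using r by (intro tendsto_intros) auto
  moreover have "eventually (\<lambda>\<theta>. measure M (deviation_event n \<delta>) \<le> D * exp (- (\<theta> * \<delta> / r)))
      (at_left 1)"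
    using eventually_at_left_real[OF zero_less_one] by (rule eventually_mono)
      (use peeling_union_bound[OF r n _ _ \<delta>] in \<open>auto simp: D_def\<close>)
  ultimately have "measure M (deviation_event n \<delta>) \<le> D * exp (- (1 * \<delta> / r))"
    by (rule tendsto_lowerbound) simp
  then show ?thesis by (simp add: D_def)
qed

text \<open>The theorem for \<open>\<delta> > 1\<close>: take the ratio \<open>r = \<delta> / (\<delta> - 1)\<close>, for which \<open>\<delta> / r = \<delta> - 1\<close>.\<close>
lemma deviation_bound_large:
  assumes n: "n \<ge> 2" and \<delta>: "\<delta> > 1"
  shows "measure M (deviation_event n \<delta>)
    \<le> exp 1 * real_of_int \<lceil>\<delta> * ln (real n)\<rceil> * exp (- \<delta>)"
proof -
  define r where "r = \<delta> / (\<delta> - 1)"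
  have r: "r > 1" using \<delta> by (simp add: r_def)
  have "- (\<delta> / r) = 1 + - \<delta>" using \<delta> by (simp add: r_def field_simps)
  then have "exp (- (\<delta> / r)) = exp 1 * exp (- \<delta>)" by (simp flip: exp_add)
  then have "measure M (deviation_event n \<delta>)
      \<le> real (nat \<lceil>ln (real n) / ln r\<rceil>) * (exp 1 * exp (- \<delta>))"
    using peeling_bound[OF r n, of \<delta>] \<delta> by simp
  also have "\<dots> \<le> real_of_int \<lceil>\<delta> * ln (real n)\<rceil> * (exp 1 * exp (- \<delta>))"
    using slice_count[OF \<delta> n] unfolding r_def by (intro mult_right_mono) auto
  finally show ?thesis by (simp add: mult_ac)
qed

text \<open>For \<open>\<delta> \<le> 1\<close> the claimed bound is at least one, hence trivial.\<close>
lemma deviation_bound_small: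
  assumes n: "n \<ge> 2" and \<delta>: "0 < \<delta>" "\<delta> \<le> 1"
  shows "measure M (deviation_event n \<delta>)
    \<le> exp 1 * real_of_int \<lceil>\<delta> * ln (real n)\<rceil> * exp (- \<delta>)"
proof -
  have "1 \<le> \<lceil>\<delta> * ln (real n)\<rceil>" using \<delta> n by simp
  moreover have "1 \<le> exp 1 * exp (- \<delta>)" using \<delta> by (simp flip: exp_add)
  ultimately have "1 \<le> exp 1 * real_of_int \<lceil>\<delta> * ln (real n)\<rceil> * exp (- \<delta>)"
    using mult_mono[of 1 "exp 1 * exp (- \<delta>)" 1 "real_of_int \<lceil>\<delta> * ln (real n)\<rceil>"]
    by (simp add: mult_ac)
  then show ?thesis using prob_le_1[of "deviation_event n \<delta>"] by linarith
qed

end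

theorem theorem4:
  fixes M :: "'a measure" and X :: "nat \<Rightarrow> 'a \<Rightarrow> real" and F :: "nat \<Rightarrow> 'a measure"
    and eps :: "nat \<Rightarrow> 'a \<Rightarrow> real"
    and \<mu> l1 l2 \<delta> :: real and n :: nat
  assumes P: "prob_space M"
    and rv: "\<And>t. t \<ge> 1 \<Longrightarrow> X t \<in> borel_measurable M"
    and indep: "prob_space.indep_vars M (\<lambda>_. borel) X {1..}"
    and ident: "\<And>t. t \<ge> 1 \<Longrightarrow> distr M borel (X t) = distr M borel (X 1)"
    and int1: "integrable M (X 1)"
    and mean: "integral\<^sup>L M (X 1) = \<mu>"
    and l_int: "l1 < 0" "0 < l2"
    and cgf_fin: "\<And>l. l \<in> {l1<..<l2} \<Longrightarrow> integrable M (\<lambda>\<omega>. exp (l * X 1 \<omega>))"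
    and sub: "\<And>t. subalgebra M (F t)"
    and mono: "\<And>s t. s \<le> t \<Longrightarrow> sets (F s) \<subseteq> sets (F t)"
    and adapt: "\<And>s t. 1 \<le> s \<Longrightarrow> s \<le> t \<Longrightarrow> X s \<in> borel_measurable (F t)"
    and indepF: "\<And>s t. t < s \<Longrightarrow>
        prob_space.indep_set M (sets (F t)) (sets (vimage_algebra (space M) (X s) borel))"
    and eps01: "\<And>t \<omega>. t \<ge> 1 \<Longrightarrow> \<omega> \<in> space M \<Longrightarrow> eps t \<omega> \<in> {0, 1}"
    and eps_pred: "\<And>t. t \<ge> 1 \<Longrightarrow> eps t \<in> borel_measurable (F (t - 1))"
    and n: "n \<ge> 2"
    and \<delta>: "\<delta> > 0"
  shows "measure M {\<omega> \<in> space M.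
            let S = (\<Sum>s=1..n. eps s \<omega> * X s \<omega>);
                N = (\<Sum>s=1..n. eps s \<omega>);
                muhat = S / N
            in N \<ge> 1 \<and> muhat < \<mu> \<and> ereal N * cramer_d M (X 1) l1 l2 muhat > ereal \<delta>}
         \<le> exp 1 * real_of_int \<lceil>\<delta> * ln (real n)\<rceil> * exp (- \<delta>)"
proof -
  interpret adaptive_sampling M X F eps \<mu> l1 l2
    unfolding adaptive_sampling_def adaptive_sampling_axioms_def
    using P rv ident int1 mean l_int cgf_fin sub mono adapt indepF eps01 eps_pred by blast
  have "measure M (deviation_event n \<delta>) \<le> exp 1 * real_of_int \<lceil>\<delta> * ln (real n)\<rceil> * exp (- \<delta>)"
    using deviation_bound_small[OF n \<delta>] deviation_bound_large[OF n] by (cases "\<delta> \<le> 1") auto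
  then show ?thesis by (simp add: deviation_event_def pulls_def sampled_sum_def Let_def)
qed

end
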